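(* Let $n\ge 2$ be an integer such that $C_n=n2^n+1$ is composite and $\phi(C_n)\mid C_n-1$. Let $k$ be the number of distinct prime factors of $C_n$. Then $k<1+2.4\log n$, where $\log$ is the natural logarithm.
   Context: $\phi$ denotes Euler's totient function, and $C_n=n2^n+1$. *)

theory Defs
  imports "HOL-Number_Theory.Number_Theory"
begin

definition C :: "nat \<Rightarrow> nat" where
  "C n = n * 2 ^ n + 1"

end

theory Submission
  imports Defs "HOL-Analysis.Harmonic_Numbers"
begin

(*
  Let N = C n = n 2^n + 1 with \<phi>(N) | N - 1 = n 2^n.  Since \<phi>(N) is divisible by
  p - 1 for every prime p | N, the product of the numbers p - 1 over the prime
  factors of N divides n 2^n.  Split these (odd) primes into two classes:

  - Fermat primes p = 2^(2^j) + 1.  Their p - 1 are distinct powers 2^(2^j), so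
    the exponents 2^j sum to less than 2n; as distinct powers of two they force
    2^f \<le> 2n, where f is the number of such factors.
  - all other odd primes.  By the classical fact that 2^a + 1 can only be prime
    when a is a power of two, p - 1 has an odd divisor m_p \<ge> 3.  The product of the m_p is
    odd and divides n 2^n, hence divides n, so 3^t \<le> n for t such factors.

  Finally f + t \<le> 1 + ln n / ln 2 + ln n / ln 3 < 1 + 2.4 ln n.
*)

definition fermat :: "nat \<Rightarrow> nat" where
  "fermat j = 2 ^ (2 ^ j) + 1"

lemma inj_fermat: "inj fermat"
  by (rule injI) (simp add: fermat_def)

lemma two_pow_card_le_sum_two_pow:
  fixes J :: "nat set"
  assumes "finite J"
  shows "2 ^ card J \<le> (\<Sum>j\<in>J. (2::nat) ^ j) + 1"
  using assms
proof (induction J rule: finite_linorder_max_induct)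
  case empty
  then show ?case by simp
next
  case (insert b A)
  have "A \<subseteq> {..<b}" using insert.hyps by auto
  hence "card A \<le> b" using card_mono[of "{..<b}" A] by simp
  hence "(2::nat) ^ card A \<le> 2 ^ b" by (rule power_increasing) simp
  moreover have "b \<notin> A" using insert.hyps by auto
  hence "card (insert b A) = Suc (card A)"
    and "(\<Sum>j\<in>insert b A. (2::nat) ^ j) = 2 ^ b + (\<Sum>j\<in>A. 2 ^ j)"
    using insert.hyps by simp_all
  ultimately show ?case using insert.IH by (simp only: power_Suc)
qed

lemma add_one_dvd_pow_add_one:
  fixes x m :: nat
  assumes "odd m"
  shows "x + 1 dvd x ^ m + 1"
proof -
  have "[int x = -1] (mod (int x + 1))"
    by (simp add: cong_iff_dvd_diff)
  hence "[int x ^ m = (-1) ^ m] (mod (int x + 1))" by (rule cong_pow)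
  hence "[int x ^ m + 1 = -1 + 1] (mod (int x + 1))"
    using assms by (intro cong_add) simp_all
  hence "int x + 1 dvd int x ^ m + 1" by (simp add: cong_0_iff)
  thus ?thesis by (metis int_dvd_int_iff of_nat_1 of_nat_add of_nat_power)
qed

text \<open>If 2^a + 1 is prime (a > 0) then a is a power of two, i.e. 2^a + 1 is a
  Fermat number: an odd factor m \<ge> 3 of a would give the proper divisor
  2^(a/m) + 1.\<close>
lemma prime_two_pow_plus_one_is_fermat:
  fixes a :: nat
  assumes prime: "prime (2 ^ a + 1 :: nat)" and "a > 0"
  shows "2 ^ a + 1 \<in> range fermat"
proof -
  obtain k m where "\<not> 2 dvd m" and a: "a = m * 2 ^ k"
    using prime_power_canonical[OF two_is_prime_nat \<open>a > 0\<close>] by blast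
  show ?thesis
  proof (cases "m = 1")
    case True
    then show ?thesis using a by (auto simp: fermat_def)
  next
    case False
    with \<open>\<not> 2 dvd m\<close> have "odd m" "m \<ge> 3" by presburger+
    define x :: nat where "x = 2 ^ (2 ^ k)"
    have "x \<ge> 2" unfolding x_def
      using power_increasing[of 1 "2 ^ k" "2::nat"] by simp
    have pow_a: "(2::nat) ^ a = x ^ m"
      unfolding x_def a by (simp only: mult.commute[of m] power_mult)
    have "x + 1 dvd 2 ^ a + 1"
      unfolding pow_a using \<open>odd m\<close> by (rule add_one_dvd_pow_add_one)
    hence "x + 1 = 1 \<or> x + 1 = 2 ^ a + 1"
      using prime unfolding prime_nat_iff by blast
    moreover have "x ^ 1 < x ^ m"
      using \<open>x \<ge> 2\<close> \<open>m \<ge> 3\<close> by (intro power_strict_increasing) auto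
    ultimately show ?thesis using \<open>x \<ge> 2\<close> unfolding pow_a by simp
  qed
qed

lemma non_fermat_prime_odd_divisor:
  fixes p :: nat
  assumes "prime p" "odd p" "p \<notin> range fermat"
  shows "\<exists>m. odd m \<and> 3 \<le> m \<and> m dvd p - 1"
proof -
  have "p \<ge> 3" using assms(1,2) prime_ge_2_nat[of p] by presburger
  then obtain a m where "\<not> 2 dvd m" and pm: "p - 1 = m * 2 ^ a"
    using prime_power_canonical[OF two_is_prime_nat, of "p - 1"] by auto
  have "m \<noteq> 1"
  proof
    assume "m = 1"
    hence p: "p = 2 ^ a + 1" using pm \<open>p \<ge> 3\<close> by simp
    hence "a > 0" using \<open>p \<ge> 3\<close> by (cases a) auto
    thus False using prime_two_pow_plus_one_is_fermat assms p by simp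
  qed
  with \<open>\<not> 2 dvd m\<close> have "odd m" "3 \<le> m" by presburger+
  thus ?thesis using pm by auto
qed

lemma prod_prime_factors_minus_one_dvd_totient:
  fixes N :: nat
  assumes "N > 0"
  shows "(\<Prod>p\<in>prime_factors N. p - 1) dvd totient N"
  unfolding totient_formula1[OF assms] by (intro prod_dvd_prod) simp

lemma fermat_factors_bound:
  fixes F :: "nat set" and n :: nat
  assumes "finite F" "F \<subseteq> range fermat" "n > 0"
    and dvd: "(\<Prod>p\<in>F. p - 1) dvd n * 2 ^ n"
  shows "2 ^ card F \<le> 2 * n"
proof -
  define J where "J = fermat -` F"
  have F: "F = fermat ` J" using assms(2) unfolding J_def by auto
  have "finite J" unfolding J_def using assms(1) inj_fermat by (rule finite_vimageI)
  have "(\<Prod>p\<in>F. p - 1) = (\<Prod>j\<in>J. fermat j - 1)"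
    unfolding F using inj_fermat by (simp add: prod.reindex inj_on_subset)
  also have "\<dots> = (\<Prod>j\<in>J. 2 ^ (2 ^ j))" by (simp add: fermat_def)
  also have "\<dots> = 2 ^ (\<Sum>j\<in>J. 2 ^ j)" by (simp add: power_sum)
  finally have "(2::nat) ^ (\<Sum>j\<in>J. 2 ^ j) dvd n * 2 ^ n" using dvd by simp
  hence "(2::nat) ^ (\<Sum>j\<in>J. 2 ^ j) \<le> n * 2 ^ n" using \<open>n > 0\<close> by (intro dvd_imp_le) auto
  also have "n * 2 ^ n < 2 ^ n * 2 ^ n" using \<open>n > 0\<close> by simp
  also have "\<dots> = 2 ^ (2 * n)" by (simp add: power_add[symmetric] mult_2)
  finally have "(\<Sum>j\<in>J. 2 ^ j) < 2 * n" by simp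
  moreover have "card F = card J"
    unfolding F using inj_fermat by (simp add: card_image inj_on_subset)
  ultimately show ?thesis using two_pow_card_le_sum_two_pow[OF \<open>finite J\<close>] by simp
qed

text \<open>At most log_3 n odd non-Fermat primes p can have (\<Prod> (p - 1)) dividing
  n 2^n: their odd divisors m_p \<ge> 3 multiply to an odd divisor of n.\<close>
lemma non_fermat_factors_bound:
  fixes T :: "nat set" and n :: nat
  assumes "finite T" "n > 0"
    and T: "\<And>p. p \<in> T \<Longrightarrow> prime p \<and> odd p \<and> p \<notin> range fermat"
    and dvd: "(\<Prod>p\<in>T. p - 1) dvd n * 2 ^ n"
  shows "3 ^ card T \<le> n"
proof -
  have "\<forall>p\<in>T. \<exists>m. odd m \<and> 3 \<le> m \<and> m dvd p - 1"
    using non_fermat_prime_odd_divisor T by blast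
  then obtain m where m: "\<forall>p\<in>T. odd (m p) \<and> 3 \<le> m p \<and> m p dvd p - 1"
    by (rule bchoice[THEN exE]) blast
  have "(\<Prod>p\<in>T. m p) dvd (\<Prod>p\<in>T. p - 1)" using m by (intro prod_dvd_prod) simp
  hence "(\<Prod>p\<in>T. m p) dvd n * 2 ^ n" using dvd by (rule dvd_trans)
  moreover have "odd (\<Prod>p\<in>T. m p)"
    using m prime_dvd_prod_iff[OF \<open>finite T\<close> two_is_prime_nat, of m] by auto
  ultimately have "(\<Prod>p\<in>T. m p) dvd n" by (simp add: coprime_dvd_mult_left_iff)
  hence "(\<Prod>p\<in>T. m p) \<le> n" using \<open>n > 0\<close> by (rule dvd_imp_le)
  moreover have "(\<Prod>p\<in>T. 3::nat) \<le> (\<Prod>p\<in>T. m p)" using m by (intro prod_mono) auto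
  ultimately show ?thesis by simp
qed

lemma inverse_ln2_plus_inverse_ln3_lt: "1 / ln 2 + 1 / ln 3 < (2.4::real)"
proof -
  have l2: "ln (2::real) \<ge> 0.69"
    using ln_approx_bounds[of 2 2] by (simp add: eval_nat_numeral)
  have l3: "ln (3::real) \<ge> 1.09"
    using ln_approx_bounds[of 3 3] by (simp add: eval_nat_numeral)
  have "1 / ln 2 + 1 / ln 3 \<le> 1 / 0.69 + 1 / (1.09::real)"
    using l2 l3 by (intro add_mono divide_left_mono) auto
  also have "\<dots> < 2.4" by simp
  finally show ?thesis .
qed

lemma le_ln_div_ln_of_pow_le:
  fixes b k x :: nat
  assumes "b > 1" "b ^ k \<le> x"
  shows "real k \<le> ln (real x) / ln (real b)"
proof -
  have "0 < b ^ k" using assms(1) by simp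
  hence "x > 0" using assms(2) by linarith
  have "real (b ^ k) \<le> real x" using assms(2) by linarith
  hence "ln (real (b ^ k)) \<le> ln (real x)" using assms(1) \<open>x > 0\<close>
    by (subst ln_le_cancel_iff) auto
  hence "real k * ln (real b) \<le> ln (real x)" by (simp add: ln_realpow)
  thus ?thesis using assms(1) by (simp add: field_simps)
qed

theorem mainTheorem3:
  fixes n :: nat
  assumes "n \<ge> 2"
    and "\<not> prime (C n)"
    and "totient (C n) dvd C n - 1"
  shows "real (card (prime_factors (C n))) < 1 + 2.4 * ln (real n)"
proof -
  define P where "P = prime_factors (C n)"
  define F where "F = P \<inter> range fermat"
  define T where "T = P - range fermat"
  have odd_N: "odd (C n)" using \<open>n \<ge> 2\<close> by (simp add: C_def)
  have "(\<Prod>p\<in>P. p - 1) dvd n * 2 ^ n"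
    using prod_prime_factors_minus_one_dvd_totient[of "C n"] assms(3)
    unfolding P_def by (simp add: C_def dvd_trans)
  moreover have "(\<Prod>p\<in>P. p - 1) = (\<Prod>p\<in>F. p - 1) * (\<Prod>p\<in>T. p - 1)"
    unfolding F_def T_def P_def by (rule prod.Int_Diff) simp
  ultimately have dvd_F: "(\<Prod>p\<in>F. p - 1) dvd n * 2 ^ n"
    and dvd_T: "(\<Prod>p\<in>T. p - 1) dvd n * 2 ^ n" by (auto intro: dvd_mult_left dvd_mult_right)
  have "2 ^ card F \<le> 2 * n"
    using dvd_F \<open>n \<ge> 2\<close> by (intro fermat_factors_bound) (auto simp: F_def P_def)
  hence "real (card F) \<le> 1 + ln (real n) / ln 2"
    using le_ln_div_ln_of_pow_le[of 2 "card F" "2 * n"] \<open>n \<ge> 2\<close> by (simp add: ln_mult add_divide_distrib)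
  moreover have "3 ^ card T \<le> n"
    using dvd_T \<open>n \<ge> 2\<close> odd_N
    by (intro non_fermat_factors_bound) (auto simp: T_def P_def intro: dvd_trans)
  hence "real (card T) \<le> ln (real n) / ln 3" using le_ln_div_ln_of_pow_le[of 3] by simp
  moreover have "card P = card F + card T"
    unfolding F_def T_def P_def by (simp add: card_Int_Diff)
  moreover have "ln (real n) / ln 2 + ln (real n) / ln 3 = (1 / ln 2 + 1 / ln 3) * ln (real n)"
    by (simp add: algebra_simps)
  moreover have "\<dots> < 2.4 * ln (real n)"
    using inverse_ln2_plus_inverse_ln3_lt \<open>n \<ge> 2\<close> by (intro mult_strict_right_mono) auto
  ultimately show ?thesis unfolding P_def by linarith
qed

end
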